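(* Let $1\le m\le n/2$, $\delta>0$ and $s:=m-\delta^2$. If $$s\in\Big]0,\ \frac{m^2}{n}+\frac{2(n-m)^2}{n(n-1)(n+2)}\Big[,$$ then every $\delta$-code $C\subset\mathcal G_{m,n}$ satisfies $$|C|\le\frac nm\cdot\frac{m-s}{-s+\frac{m^2}{n}+\frac{2(n-m)^2}{n(n-1)(n+2)}}.$$
   Context: $\mathcal G_{m,n}$ is the set of $m$-dimensional linear subspaces of $\mathbb R^n$. For $p,q\in\mathcal G_{m,n}$ with principal angles $\theta_1,\dots,\theta_m\in[0,\pi/2]$ (defined recursively: $\theta_1$ is the minimal angle between a line of $p$ and a line of $q$, the rest are the principal angles of the orthogonal complements of these lines in $p$ and $q$), the chordal distance is $d_c(p,q)=\sqrt{\sum_i\sin^2\theta_i}$. A $\delta$-code is a finite $C\subset\mathcal G_{m,n}$ with $d_c(p,q)\ge\delta$ for all distinct $p,q\in C$. *)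

theory Defs
  imports "HOL-Analysis.Analysis"
begin

definition grassmannian :: "nat \<Rightarrow> (real^'n) set set" where
  "grassmannian m = {V. subspace V \<and> dim V = m}"

text \<open>The angle between the lines spanned by unit vectors x, y is
  arccos |x . y| in [0, pi/2]; minimal angle = maximal |x . y|.\<close>
definition principal_angles :: "nat \<Rightarrow> (real^'n) set \<Rightarrow> (real^'n) set \<Rightarrow> (nat \<Rightarrow> real) \<Rightarrow> bool" where
  "principal_angles k p q \<theta> \<longleftrightarrow>
     (\<exists>u v. \<forall>i<k.
        u i \<in> p \<and> v i \<in> q \<and> norm (u i) = 1 \<and> norm (v i) = 1 \<and>
        (\<forall>j<i. orthogonal (u j) (u i) \<and> orthogonal (v j) (v i)) \<and>
        \<theta> i = arccos \<bar>u i \<bullet> v i\<bar> \<and>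
        (\<forall>x y. x \<in> p \<and> y \<in> q \<and> norm x = 1 \<and> norm y = 1 \<and>
               (\<forall>j<i. orthogonal (u j) x \<and> orthogonal (v j) y)
               \<longrightarrow> \<bar>x \<bullet> y\<bar> \<le> \<bar>u i \<bullet> v i\<bar>))"

definition chordal_dist :: "(real^'n) set \<Rightarrow> (real^'n) set \<Rightarrow> real" where
  "chordal_dist p q =
     (let \<theta> = (SOME \<theta>. principal_angles (dim p) p q \<theta>)
      in sqrt (\<Sum>i<dim p. (sin (\<theta> i))\<^sup>2))"

definition delta_code :: "nat \<Rightarrow> real \<Rightarrow> (real^'n) set set \<Rightarrow> bool" where
  "delta_code m \<delta> C \<longleftrightarrow> finite C \<and> C \<subseteq> grassmannian m \<and>
     (\<forall>p\<in>C. \<forall>q\<in>C. p \<noteq> q \<longrightarrow> chordal_dist p q \<ge> \<delta>)"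

end

(*
  Send each p in the code to the traceless part M p = P p - (m/n) I of the matrix P p of the
  orthogonal projection onto p. Principal vectors show <P p, P q> = m - d_c(p, q)^2, so the M p
  are symmetric and traceless, satisfy M p ** M p = (1 - 2m/n) M p + (m/n - m^2/n^2) I, and
  their mutual inner products lie in [-m^2/n, s - m^2/n].

  Regard 4-tensors as linear maps on matrices. The projection onto the traceless symmetric
  matrices is orthogonal to left multiplication by sum_p M p, so Bessel's inequality for the
  tensor sum_p M p (x) M p bounds sum_(p,q) <M p, M q>^2 from below. The polynomial
  (y - s + m^2/n) (y + m^2/n) is nonpositive at every off-diagonal inner product; summing it over
  all pairs (Delsarte's linear programming method) and inserting the lower bound leaves an
  inequality for |C| alone, because the terms in |sum_p M p|^2 get a nonnegative coefficient
  as long as s is below the stated threshold.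
*)

theory Submission
  imports Defs
begin

section \<open>Orthonormal bases\<close>

definition orthonormal :: "'a::real_inner set \<Rightarrow> bool" where
  "orthonormal B \<longleftrightarrow> pairwise orthogonal B \<and> (\<forall>x\<in>B. norm x = 1)"

lemma orthonormal_inner:
  "orthonormal B \<Longrightarrow> u \<in> B \<Longrightarrow> v \<in> B \<Longrightarrow> u \<bullet> v = of_bool (u = v)"
  unfolding orthonormal_def pairwise_def orthogonal_def by (auto simp: norm_eq_1)

lemma orthonormal_inner_expand:
  fixes B :: "'a::euclidean_space set"
  assumes "finite B" "orthonormal B" "y \<in> span B"
  shows "y \<bullet> x = (\<Sum>w\<in>B. (y \<bullet> w) * (w \<bullet> x))"
proof -
  have "(\<Sum>w\<in>B. (y \<bullet> w) *\<^sub>R w) = y"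
    using assms orthonormal_basis_expand[of B y] unfolding orthonormal_def by blast
  then have "y \<bullet> x = (\<Sum>w\<in>B. (y \<bullet> w) *\<^sub>R w) \<bullet> x"
    by simp
  then show ?thesis
    by (simp add: inner_sum_left)
qed

lemma orthonormal_sum_inner_mult_eq:
  fixes B B' :: "'a::euclidean_space set"
  assumes B: "finite B" "orthonormal B" and B': "finite B'" "orthonormal B'"
    and span: "span B = span B'"
  shows "(\<Sum>u\<in>B. (u \<bullet> x) * (u \<bullet> y)) = (\<Sum>w\<in>B'. (w \<bullet> x) * (w \<bullet> y))"
proof -
  have "u \<bullet> x = (\<Sum>w\<in>B'. (u \<bullet> w) * (w \<bullet> x))" if "u \<in> B" for u
    using orthonormal_inner_expand[OF B'] that span by (metis span_base)
  then have "(\<Sum>u\<in>B. (u \<bullet> x) * (u \<bullet> y)) = (\<Sum>u\<in>B. \<Sum>w\<in>B'. (u \<bullet> w) * (w \<bullet> x) * (u \<bullet> y))"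
    by (simp add: sum_distrib_right)
  also have "\<dots> = (\<Sum>w\<in>B'. (w \<bullet> x) * (\<Sum>u\<in>B. (w \<bullet> u) * (u \<bullet> y)))"
    by (subst sum.swap) (simp add: sum_distrib_left inner_commute mult_ac)
  also have "\<dots> = (\<Sum>w\<in>B'. (w \<bullet> x) * (w \<bullet> y))"
  proof -
    have "w \<bullet> y = (\<Sum>u\<in>B. (w \<bullet> u) * (u \<bullet> y))" if "w \<in> B'" for w
      using orthonormal_inner_expand[OF B] that span by (metis span_base)
    then show ?thesis
      by simp
  qed
  finally show ?thesis .
qed

lemma grassmannian_orthonormal_basis:
  assumes "p \<in> grassmannian m"
  obtains B where "finite B" "orthonormal B" "span B = p" "card B = m"
proof -
  have "subspace p" "dim p = m"
    using assms unfolding grassmannian_def by auto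
  then obtain B where "pairwise orthogonal B" "\<And>x. x \<in> B \<Longrightarrow> norm x = 1"
    "independent B" "card B = m" "span B = p"
    by (metis orthonormal_basis_subspace)
  then show ?thesis
    using that[of B] independent_imp_finite[of B] unfolding orthonormal_def by blast
qed

lemma orthonormal_sequence_basis:
  fixes u :: "nat \<Rightarrow> 'a::euclidean_space"
  assumes p: "subspace p" "dim p = m"
    and u: "\<And>i. i < m \<Longrightarrow> u i \<in> p" "\<And>i. i < m \<Longrightarrow> norm (u i) = 1"
    and orth: "\<And>i j. j < i \<Longrightarrow> i < m \<Longrightarrow> orthogonal (u j) (u i)"
  shows "inj_on u {..<m}" "orthonormal (u ` {..<m})" "span (u ` {..<m}) = p"
proof -
  have orth': "orthogonal (u i) (u j)" if "i < m" "j < m" "i \<noteq> j" for i j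
    using orth that by (metis linorder_neqE_nat orthogonal_commute)
  show inj: "inj_on u {..<m}"
  proof (rule inj_onI)
    fix i j assume "i \<in> {..<m}" "j \<in> {..<m}" "u i = u j"
    then show "i = j"
      using orth'[of i j] u(2)[of i] by (metis lessThan_iff norm_zero orthogonal_self zero_neq_one)
  qed
  show on: "orthonormal (u ` {..<m})"
    unfolding orthonormal_def pairwise_def using orth' u(2) by auto
  have "0 \<notin> u ` {..<m}"
    using u(2) by (metis imageE lessThan_iff norm_zero zero_neq_one)
  then have "independent (u ` {..<m})"
    using on unfolding orthonormal_def by (intro pairwise_orthogonal_independent) auto
  moreover have "u ` {..<m} \<subseteq> p" "card (u ` {..<m}) = dim p"
    using u(1) p(2) card_image[OF inj] by auto
  ultimately show "span (u ` {..<m}) = p"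
    using p(1)
    by (metis card_eq_dim finite_imageI finite_lessThan subset_antisym span_mono span_eq_iff)
qed

section \<open>Principal vectors and the chordal distance\<close>

definition principal_pair ::
    "'a::real_inner set \<Rightarrow> 'a set \<Rightarrow> (nat \<Rightarrow> 'a) \<Rightarrow> (nat \<Rightarrow> 'a) \<Rightarrow> nat \<Rightarrow> bool" where
  "principal_pair p q u v i \<longleftrightarrow> u i \<in> p \<and> v i \<in> q \<and> norm (u i) = 1 \<and> norm (v i) = 1 \<and>
     (\<forall>j<i. orthogonal (u j) (u i) \<and> orthogonal (v j) (v i)) \<and>
     (\<forall>x y. x \<in> p \<and> y \<in> q \<and> norm x = 1 \<and> norm y = 1 \<and>
            (\<forall>j<i. orthogonal (u j) x \<and> orthogonal (v j) y) \<longrightarrow> \<bar>x \<bullet> y\<bar> \<le> \<bar>u i \<bullet> v i\<bar>)"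

lemma principal_angles_iff:
  "principal_angles k p q \<theta> \<longleftrightarrow>
     (\<exists>u v. \<forall>i<k. principal_pair p q u v i \<and> \<theta> i = arccos \<bar>u i \<bullet> v i\<bar>)"
  unfolding principal_angles_def principal_pair_def by (simp only: conj_ac)

lemma principal_pairD:
  "principal_pair p q u v i \<Longrightarrow> u i \<in> p \<and> v i \<in> q \<and> norm (u i) = 1 \<and> norm (v i) = 1 \<and>
     (\<forall>j<i. orthogonal (u j) (u i) \<and> orthogonal (v j) (v i))"
  unfolding principal_pair_def by blast

lemma principal_pair_swap: "principal_pair p q u v i \<Longrightarrow> principal_pair q p v u i"
  unfolding principal_pair_def by (auto simp: inner_commute) (metis inner_commute)

lemma principal_pair_fun_upd:
  "i < k \<Longrightarrow> principal_pair p q (u(k := x)) (v(k := y)) i \<longleftrightarrow> principal_pair p q u v i"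
  unfolding principal_pair_def by simp

lemma orthogonal_complement_meets_unit_sphere:
  fixes p :: "'a::euclidean_space set"
  assumes "subspace p" "finite U" "U \<subseteq> p" "card U < dim p"
  shows "p \<inter> {y. \<forall>x\<in>U. orthogonal x y} \<inter> sphere 0 1 \<noteq> {}"
proof -
  have "span U \<subseteq> span p"
    using assms(3) by (rule span_mono)
  moreover have "span U \<noteq> span p"
    using assms dim_le_card[OF span_superset assms(2)] by (metis dim_span not_le)
  ultimately obtain x where x: "x \<noteq> 0" "x \<in> span p" "\<And>y. y \<in> span U \<Longrightarrow> orthogonal x y"
    using orthogonal_to_subspace_exists_gen[of U p] by blast
  have "x /\<^sub>R norm x \<in> p"
    using x(2) assms(1) by (metis span_eq_iff subspace_scale)
  moreover have "orthogonal w (x /\<^sub>R norm x)" if "w \<in> U" for w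
    using x(3)[OF span_base[OF that]] by (simp add: orthogonal_def inner_commute)
  ultimately have "x /\<^sub>R norm x \<in> p \<inter> {y. \<forall>x\<in>U. orthogonal x y} \<inter> sphere 0 1"
    using x(1) by simp
  then show ?thesis
    by blast
qed

lemma abs_inner_attains_max:
  fixes P Q :: "'a::euclidean_space set"
  assumes "closed P" "closed Q" "P \<inter> sphere 0 1 \<noteq> {}" "Q \<inter> sphere 0 1 \<noteq> {}"
  obtains x y where "x \<in> P" "norm x = 1" "y \<in> Q" "norm y = 1"
    "\<And>x' y'. x' \<in> P \<Longrightarrow> norm x' = 1 \<Longrightarrow> y' \<in> Q \<Longrightarrow> norm y' = 1 \<Longrightarrow> \<bar>x' \<bullet> y'\<bar> \<le> \<bar>x \<bullet> y\<bar>"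
proof -
  let ?S = "(P \<inter> sphere 0 1) \<times> (Q \<inter> sphere 0 1)"
  have "compact ?S"
    using assms(1,2) by (intro compact_Times closed_Int_compact compact_sphere)
  moreover have "?S \<noteq> {}"
    using assms(3,4) by simp
  moreover have "continuous_on ?S (\<lambda>z. \<bar>fst z \<bullet> snd z\<bar>)"
    by (intro continuous_intros)
  ultimately have "\<exists>z\<in>?S. \<forall>z'\<in>?S. \<bar>fst z' \<bullet> snd z'\<bar> \<le> \<bar>fst z \<bullet> snd z\<bar>"
    by (rule continuous_attains_sup)
  then obtain x y where "(x, y) \<in> ?S" and "\<forall>z'\<in>?S. \<bar>fst z' \<bullet> snd z'\<bar> \<le> \<bar>x \<bullet> y\<bar>"
    by auto
  then show ?thesis
    by (intro that) auto
qed

lemma principal_pairs_exist: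
  fixes p q :: "'a::euclidean_space set"
  assumes p: "subspace p" and q: "subspace q"
  shows "k \<le> dim p \<Longrightarrow> k \<le> dim q \<Longrightarrow> \<exists>u v. \<forall>i<k. principal_pair p q u v i"
proof (induction k)
  case 0
  then show ?case by simp
next
  case (Suc k)
  then obtain u v where uv: "\<forall>i<k. principal_pair p q u v i"
    by auto
  define P where "P = p \<inter> {y. \<forall>x\<in>u ` {..<k}. orthogonal x y}"
  define Q where "Q = q \<inter> {y. \<forall>x\<in>v ` {..<k}. orthogonal x y}"
  have "subspace P" "subspace Q"
    unfolding P_def Q_def by (intro subspace_inter p q subspace_orthogonal_to_vectors)+
  moreover have "P \<inter> sphere 0 1 \<noteq> {}"
    unfolding P_def using uv card_image_le[of "{..<k}" u] Suc.prems
    by (intro orthogonal_complement_meets_unit_sphere p) (auto simp: principal_pair_def)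
  moreover have "Q \<inter> sphere 0 1 \<noteq> {}"
    unfolding Q_def using uv card_image_le[of "{..<k}" v] Suc.prems
    by (intro orthogonal_complement_meets_unit_sphere q) (auto simp: principal_pair_def)
  ultimately obtain x y where "x \<in> P" "norm x = 1" "y \<in> Q" "norm y = 1"
    "\<And>x' y'. x' \<in> P \<Longrightarrow> norm x' = 1 \<Longrightarrow> y' \<in> Q \<Longrightarrow> norm y' = 1 \<Longrightarrow> \<bar>x' \<bullet> y'\<bar> \<le> \<bar>x \<bullet> y\<bar>"
    using abs_inner_attains_max[OF closed_subspace closed_subspace] by blast
  then have "principal_pair p q (u(k := x)) (v(k := y)) k"
    unfolding principal_pair_def P_def Q_def by auto
  with uv have "\<forall>i<Suc k. principal_pair p q (u(k := x)) (v(k := y)) i"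
    by (simp add: less_Suc_eq principal_pair_fun_upd)
  then show ?case by blast
qed

(* Otherwise a unit vector of q in the plane of v i and v j, orthogonal to the v l with l < i,
   would have a larger inner product with u i than v i has. *)
lemma principal_pair_cross_orthogonal:
  assumes pairs: "\<forall>l<k. principal_pair p q u v l" and q: "subspace q" and ij: "i < j" "j < k"
  shows "u i \<bullet> v j = 0"
proof (rule ccontr)
  define a where "a = u i \<bullet> v i"
  define b where "b = u i \<bullet> v j"
  define r where "r = sqrt (a\<^sup>2 + b\<^sup>2)"
  assume "u i \<bullet> v j \<noteq> 0"
  then have b: "b \<noteq> 0"
    unfolding b_def .
  then have "sqrt (a\<^sup>2) < sqrt (a\<^sup>2 + b\<^sup>2)"
    by (intro real_sqrt_less_mono) simp
  then have "\<bar>a\<bar> < r"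
    by (simp add: r_def)
  then have r: "r > 0" "r\<^sup>2 = a\<^sup>2 + b\<^sup>2"
    unfolding r_def by (linarith, simp)
  have pi: "principal_pair p q u v i" and "principal_pair p q u v j"
    using pairs ij by auto
  then have v: "v i \<in> q" "v j \<in> q" "v i \<bullet> v i = 1" "v j \<bullet> v j = 1" "v i \<bullet> v j = 0"
    and v_orth: "\<And>l. l < i \<Longrightarrow> v l \<bullet> v i = 0 \<and> v l \<bullet> v j = 0"
    using ij unfolding principal_pair_def orthogonal_def by (auto simp: norm_eq_1 inner_commute)
  define y where "y = (a / r) *\<^sub>R v i + (b / r) *\<^sub>R v j"
  have "y \<in> q"
    unfolding y_def using q v by (simp add: subspace_add subspace_scale)
  moreover have "norm y = 1"
    using v r b by (simp add: y_def norm_eq_1 inner_add_left inner_add_right inner_commute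
        power2_eq_square add_divide_distrib [symmetric])
  moreover have "\<forall>l<i. orthogonal (v l) y"
    using v_orth by (simp add: y_def orthogonal_def inner_add_right)
  ultimately have "\<bar>u i \<bullet> y\<bar> \<le> \<bar>a\<bar>"
    using pi unfolding principal_pair_def a_def by blast
  have "u i \<bullet> y = (a\<^sup>2 + b\<^sup>2) / r"
    by (simp add: y_def a_def b_def inner_add_right power2_eq_square add_divide_distrib)
  also have "\<dots> = r"
    unfolding r(2)[symmetric] using r(1) by (simp add: power2_eq_square)
  finally show False
    using \<open>\<bar>u i \<bullet> y\<bar> \<le> \<bar>a\<bar>\<close> \<open>\<bar>a\<bar> < r\<close> by simp
qed

lemma principal_pairs_cross_orthogonal:
  assumes pairs: "\<forall>l<k. principal_pair p q u v l" and "subspace p" "subspace q"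
    and "i \<noteq> j" "i < k" "j < k"
  shows "u i \<bullet> v j = 0"
proof (cases "i < j")
  case True
  then show ?thesis
    using principal_pair_cross_orthogonal[OF pairs] assms by blast
next
  case False
  have "\<forall>l<k. principal_pair q p v u l"
    using pairs principal_pair_swap by blast
  then have "v j \<bullet> u i = 0"
    using principal_pair_cross_orthogonal False assms by (metis linorder_neqE_nat)
  then show ?thesis
    by (simp add: inner_commute)
qed

lemma chordal_dist_sq_principal_pairs:
  assumes "p \<in> grassmannian m" "q \<in> grassmannian m"
  obtains u v where "\<forall>i<m. principal_pair p q u v i"
    and "(chordal_dist p q)\<^sup>2 = real m - (\<Sum>i<m. (u i \<bullet> v i)\<^sup>2)"
proof -
  define \<theta> where "\<theta> = (SOME \<theta>. principal_angles m p q \<theta>)"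
  have p: "subspace p" "dim p = m" and q: "subspace q" "dim q = m"
    using assms unfolding grassmannian_def by auto
  then obtain u0 v0 where "\<forall>i<m. principal_pair p q u0 v0 i"
    using principal_pairs_exist[OF p(1) q(1), of m] by auto
  then have "principal_angles m p q (\<lambda>i. arccos \<bar>u0 i \<bullet> v0 i\<bar>)"
    unfolding principal_angles_iff by blast
  then have "principal_angles m p q \<theta>"
    unfolding \<theta>_def by (rule someI[where P = "principal_angles m p q"])
  then obtain u v where uv: "\<forall>i<m. principal_pair p q u v i \<and> \<theta> i = arccos \<bar>u i \<bullet> v i\<bar>"
    unfolding principal_angles_iff by blast
  have inner_sq_le: "(u i \<bullet> v i)\<^sup>2 \<le> 1" if "i < m" for i
    using principal_pairD[of p q u v i] uv that Cauchy_Schwarz_ineq2[of "u i" "v i"]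
    by (simp add: abs_square_le_1)
  have "(sin (\<theta> i))\<^sup>2 = 1 - (u i \<bullet> v i)\<^sup>2" if "i < m" for i
    using uv that inner_sq_le[OF that] by (simp add: sin_arccos abs_square_le_1)
  then have "chordal_dist p q = sqrt (\<Sum>i<m. 1 - (u i \<bullet> v i)\<^sup>2)"
    unfolding chordal_dist_def Let_def p(2) \<theta>_def[symmetric] by simp
  moreover have "0 \<le> (\<Sum>i<m. 1 - (u i \<bullet> v i)\<^sup>2)"
    using inner_sq_le by (intro sum_nonneg) simp
  ultimately have "(chordal_dist p q)\<^sup>2 = real m - (\<Sum>i<m. (u i \<bullet> v i)\<^sup>2)"
    by (simp add: sum_subtractf)
  then show ?thesis
    using that uv by blast
qed

section \<open>Projection matrices\<close>

definition outer_product :: "real^'n \<Rightarrow> real^'m \<Rightarrow> real^'m^'n" where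
  "outer_product x y = (\<chi> i j. x $ i * y $ j)"

lemma inner_outer_product: "outer_product x y \<bullet> outer_product u v = (x \<bullet> u) * (y \<bullet> v)"
proof -
  have "(x \<bullet> u) * (y \<bullet> v) = (\<Sum>i\<in>UNIV. x $ i * u $ i * (y \<bullet> v))"
    by (simp add: inner_vec_def sum_distrib_right)
  then show ?thesis
    by (simp add: outer_product_def inner_vec_def sum_distrib_left mult_ac)
qed

definition proj_matrix :: "(real^'n) set \<Rightarrow> real^'n^'n" where
  "proj_matrix B = (\<Sum>w\<in>B. outer_product w w)"

lemma proj_matrix_component: "proj_matrix B $ a $ b = (\<Sum>w\<in>B. w $ a * w $ b)"
  by (simp add: proj_matrix_def outer_product_def)

lemma proj_matrix_span_eq:
  assumes "finite B" "orthonormal B" "finite B'" "orthonormal B'" "span B = span B'"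
  shows "proj_matrix B = proj_matrix B'"
proof -
  have "(\<Sum>w\<in>B. w $ a * w $ b) = (\<Sum>w\<in>B'. w $ a * w $ b)" for a b
    using orthonormal_sum_inner_mult_eq[OF assms, of "axis a 1" "axis b 1"]
    by (simp add: inner_axis)
  then show ?thesis
    by (simp add: vec_eq_iff proj_matrix_component)
qed

lemma inner_proj_matrix:
  "proj_matrix B \<bullet> proj_matrix B' = (\<Sum>w\<in>B. \<Sum>z\<in>B'. (w \<bullet> z)\<^sup>2)"
  by (simp add: proj_matrix_def inner_sum_left inner_sum_right inner_outer_product power2_eq_square)
    (rule sum.swap)

lemma transpose_proj_matrix: "transpose (proj_matrix B) = proj_matrix B"
  by (simp add: proj_matrix_component transpose_def mult.commute vec_eq_iff)

lemma trace_proj_matrix: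
  assumes "orthonormal B"
  shows "trace (proj_matrix B) = real (card B)"
proof -
  have "trace (proj_matrix B) = (\<Sum>w\<in>B. w \<bullet> w)"
    unfolding trace_def inner_vec_def proj_matrix_component by (simp add: sum.swap[of _ UNIV B])
  also have "\<dots> = real (card B)"
    using orthonormal_inner[OF assms] by simp
  finally show ?thesis .
qed

lemma proj_matrix_idem:
  assumes "finite B" "orthonormal B"
  shows "proj_matrix B ** proj_matrix B = proj_matrix B"
proof -
  have "(\<Sum>c\<in>UNIV. (\<Sum>w\<in>B. w $ a * w $ c) * (\<Sum>z\<in>B. z $ c * z $ b))
      = (\<Sum>w\<in>B. \<Sum>z\<in>B. \<Sum>c\<in>UNIV. w $ a * (w $ c * z $ c) * z $ b)" for a b
  proof -
    have "(\<Sum>c\<in>UNIV. (\<Sum>w\<in>B. w $ a * w $ c) * (\<Sum>z\<in>B. z $ c * z $ b))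
        = (\<Sum>c\<in>UNIV. \<Sum>w\<in>B. \<Sum>z\<in>B. w $ a * (w $ c * z $ c) * z $ b)"
      by (simp add: sum_product mult_ac)
    also have "\<dots> = (\<Sum>w\<in>B. \<Sum>c\<in>UNIV. \<Sum>z\<in>B. w $ a * (w $ c * z $ c) * z $ b)"
      by (rule sum.swap)
    also have "\<dots> = (\<Sum>w\<in>B. \<Sum>z\<in>B. \<Sum>c\<in>UNIV. w $ a * (w $ c * z $ c) * z $ b)"
      by (rule sum.cong[OF refl], rule sum.swap)
    finally show ?thesis .
  qed
  also have "\<dots> a b = (\<Sum>w\<in>B. \<Sum>z\<in>B. w $ a * (w \<bullet> z) * z $ b)" for a b
    by (simp add: inner_vec_def sum_distrib_left sum_distrib_right)
  also have "\<dots> a b = (\<Sum>w\<in>B. \<Sum>z\<in>B. if z = w then w $ a * z $ b else 0)" for a b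
    using assms(2) by (intro sum.cong refl) (auto simp: orthonormal_inner)
  also have "\<dots> a b = (\<Sum>w\<in>B. w $ a * w $ b)" for a b
    using assms(1) by simp
  finally have "(\<Sum>c\<in>UNIV. (\<Sum>w\<in>B. w $ a * w $ c) * (\<Sum>z\<in>B. z $ c * z $ b))
      = (\<Sum>w\<in>B. w $ a * w $ b)" for a b .
  then show ?thesis
    unfolding vec_eq_iff matrix_matrix_mult_def proj_matrix_component by simp
qed

lemma chordal_dist_sq:
  assumes p: "p \<in> grassmannian m" and q: "q \<in> grassmannian m"
    and B: "finite B" "orthonormal B" "span B = p"
    and B': "finite B'" "orthonormal B'" "span B' = q"
  shows "(chordal_dist p q)\<^sup>2 = real m - proj_matrix B \<bullet> proj_matrix B'"
proof -
  have sp: "subspace p" "dim p = m" "subspace q" "dim q = m"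
    using p q unfolding grassmannian_def by auto
  obtain u v where pairs: "\<forall>i<m. principal_pair p q u v i"
    and dist: "(chordal_dist p q)\<^sup>2 = real m - (\<Sum>i<m. (u i \<bullet> v i)\<^sup>2)"
    using chordal_dist_sq_principal_pairs[OF p q] by blast
  have U: "inj_on u {..<m}" "orthonormal (u ` {..<m})" "span (u ` {..<m}) = p"
    using pairs principal_pairD by (intro orthonormal_sequence_basis[OF sp(1,2)]; blast)+
  have V: "inj_on v {..<m}" "orthonormal (v ` {..<m})" "span (v ` {..<m}) = q"
    using pairs principal_pairD by (intro orthonormal_sequence_basis[OF sp(3,4)]; blast)+
  have "proj_matrix B = proj_matrix (u ` {..<m})" "proj_matrix B' = proj_matrix (v ` {..<m})"
    using proj_matrix_span_eq[OF B(1,2) _ U(2)] proj_matrix_span_eq[OF B'(1,2) _ V(2)]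
      B(3) B'(3) U(3) V(3)
    by simp_all
  then have "proj_matrix B \<bullet> proj_matrix B' = proj_matrix (u ` {..<m}) \<bullet> proj_matrix (v ` {..<m})"
    by simp
  also have "\<dots> = (\<Sum>i<m. \<Sum>j<m. (u i \<bullet> v j)\<^sup>2)"
    by (simp add: inner_proj_matrix sum.reindex U(1) V(1))
  also have "\<dots> = (\<Sum>i<m. \<Sum>j<m. if j = i then (u i \<bullet> v i)\<^sup>2 else 0)"
    using principal_pairs_cross_orthogonal[OF pairs sp(1,3)] by (intro sum.cong refl) auto
  also have "\<dots> = (\<Sum>i<m. (u i \<bullet> v i)\<^sup>2)"
    by simp
  finally show ?thesis
    using dist by simp
qed

section \<open>Codes as families of symmetric traceless matrices\<close>

lemma matrix_diff_ldistrib: "A ** (B - C) = A ** B - A ** (C :: 'a::ring_1^'p^'n)"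
  by (simp add: matrix_matrix_mult_def vec_eq_iff sum_subtractf right_diff_distrib)

lemma matrix_diff_rdistrib: "(A - B) ** C = A ** C - B ** (C :: 'a::ring_1^'p^'n)"
  by (simp add: matrix_matrix_mult_def vec_eq_iff sum_subtractf left_diff_distrib)

lemma idempotent_shift_square:
  fixes P :: "real^'n^'n"
  assumes "P ** P = P"
  shows "(P - k *\<^sub>R mat 1) ** (P - k *\<^sub>R mat 1)
           = (1 - 2 * k) *\<^sub>R (P - k *\<^sub>R mat 1) + (k - k\<^sup>2) *\<^sub>R mat 1"
proof -
  have "(P - k *\<^sub>R mat 1) ** (P - k *\<^sub>R mat 1)
      = P ** P - (k *\<^sub>R mat 1) ** P - (P ** (k *\<^sub>R mat 1) - (k *\<^sub>R mat 1) ** (k *\<^sub>R mat 1))"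
    by (simp only: matrix_diff_ldistrib matrix_diff_rdistrib)
  also have "\<dots> = P - k *\<^sub>R P - (k *\<^sub>R P - (k * k) *\<^sub>R mat 1)"
    by (simp only: assms matrix_scalar_ac scaleR_scaleR matrix_mul_lid matrix_mul_rid
        flip: scalar_matrix_assoc)
  finally show ?thesis
    by (simp add: vec_eq_iff algebra_simps power2_eq_square)
qed

lemma transpose_diff: "transpose (A - B) = transpose A - transpose (B :: real^'n^'m)"
  by (simp add: transpose_def vec_eq_iff)

lemma inner_mat_1: "A \<bullet> mat 1 = trace (A :: real^'n^'n)"
  by (simp add: inner_vec_def trace_def mat_def if_distrib cong: if_cong)

lemma inner_matrix_eq_trace: "A \<bullet> B = trace (A ** transpose (B :: real^'n::finite^'n))"
  by (simp add: inner_vec_def trace_def matrix_matrix_mult_def transpose_def)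

lemma trace_sum: "trace (\<Sum>p\<in>C. M p) = (\<Sum>p\<in>C. trace (M p :: real^'n::finite^'n))"
  unfolding trace_def by (simp add: sum.swap[of _ UNIV C])

lemma trace_scaleR: "trace (c *\<^sub>R A) = c * trace (A :: real^'n::finite^'n)"
  by (simp add: trace_def sum_distrib_left)

lemma inner_self_quadratic_matrix:
  fixes A :: "real^'n::finite^'n"
  assumes "transpose A = A" "trace A = 0" "A ** A = g *\<^sub>R A + c *\<^sub>R mat 1"
  shows "A \<bullet> A = real CARD('n) * c"
  using assms by (simp add: inner_matrix_eq_trace trace_add trace_scaleR trace_I)

lemma delta_code_centered_projections:
  fixes C :: "(real^'n) set set"
  assumes code: "delta_code m \<delta> C" and "0 \<le> \<delta>" and k: "k = real m / real CARD('n)"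
  obtains M :: "(real^'n) set \<Rightarrow> real^'n^'n"
  where "\<And>p. p \<in> C \<Longrightarrow> transpose (M p) = M p"
    and "\<And>p. p \<in> C \<Longrightarrow> trace (M p) = 0"
    and "\<And>p. p \<in> C \<Longrightarrow> M p ** M p = (1 - 2 * k) *\<^sub>R M p + (k - k\<^sup>2) *\<^sub>R mat 1"
    and "\<And>p q. p \<in> C \<Longrightarrow> q \<in> C \<Longrightarrow> p \<noteq> q \<Longrightarrow>
           - (real m * k) \<le> M p \<bullet> M q \<and> M p \<bullet> M q \<le> real m - \<delta>\<^sup>2 - real m * k"
proof -
  have C: "C \<subseteq> grassmannian m"
    and dist: "\<And>p q. p \<in> C \<Longrightarrow> q \<in> C \<Longrightarrow> p \<noteq> q \<Longrightarrow> \<delta> \<le> chordal_dist p q"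
    using code unfolding delta_code_def by auto
  have "\<forall>p\<in>C. \<exists>B. finite B \<and> orthonormal B \<and> span B = p \<and> card B = m"
    using C grassmannian_orthonormal_basis by (metis subsetD)
  then obtain B where
    B: "\<And>p. p \<in> C \<Longrightarrow> finite (B p) \<and> orthonormal (B p) \<and> span (B p) = p \<and> card (B p) = m"
    by metis
  define M where "M p = proj_matrix (B p) - k *\<^sub>R mat 1" for p
  have k_n: "k * real CARD('n) = real m"
    unfolding k by simp
  have trace_P: "trace (proj_matrix (B p)) = real m" if "p \<in> C" for p
    using B[OF that] by (simp add: trace_proj_matrix)
  have inner_M: "M p \<bullet> M q = proj_matrix (B p) \<bullet> proj_matrix (B q) - real m * k"
    if "p \<in> C" "q \<in> C" for p q
    using trace_P[OF that(1)] trace_P[OF that(2)] k_n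
    by (simp add: M_def inner_diff_left inner_diff_right inner_mat_1 inner_commute[of "mat 1"]
        trace_sub trace_scaleR trace_I algebra_simps)
  show ?thesis
  proof (rule that)
    fix p assume p: "p \<in> C"
    show "transpose (M p) = M p"
      by (simp add: M_def transpose_diff transpose_proj_matrix transpose_scalar)
    show "trace (M p) = 0"
      using trace_P[OF p] k_n by (simp add: M_def trace_sub trace_scaleR trace_I mult.commute)
    show "M p ** M p = (1 - 2 * k) *\<^sub>R M p + (k - k\<^sup>2) *\<^sub>R mat 1"
      using B[OF p] by (simp add: M_def idempotent_shift_square proj_matrix_idem)
  next
    fix p q assume pq: "p \<in> C" "q \<in> C" "p \<noteq> q"
    have "\<delta>\<^sup>2 \<le> (chordal_dist p q)\<^sup>2"
      using dist[OF pq] \<open>0 \<le> \<delta>\<close> by (simp add: power_mono)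
    moreover have "(chordal_dist p q)\<^sup>2 = real m - proj_matrix (B p) \<bullet> proj_matrix (B q)"
      using B[OF pq(1)] B[OF pq(2)] pq C by (intro chordal_dist_sq) auto
    ultimately have "proj_matrix (B p) \<bullet> proj_matrix (B q) \<le> real m - \<delta>\<^sup>2"
      by simp
    moreover have "0 \<le> proj_matrix (B p) \<bullet> proj_matrix (B q)"
      by (simp add: inner_proj_matrix sum_nonneg)
    ultimately show "- (real m * k) \<le> M p \<bullet> M q \<and> M p \<bullet> M q \<le> real m - \<delta>\<^sup>2 - real m * k"
      using inner_M[OF pq(1,2)] by simp
  qed
qed

section \<open>A lower bound for sums of squared inner products\<close>

lemma bessel_inequality_orthogonal_pair:
  fixes x e f :: "'a::real_inner"
  assumes "e \<bullet> f = 0"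
  shows "(x \<bullet> e)\<^sup>2 / (e \<bullet> e) + (x \<bullet> f)\<^sup>2 / (f \<bullet> f) \<le> x \<bullet> x"
proof -
  define a where "a = (x \<bullet> e) / (e \<bullet> e)"
  define b where "b = (x \<bullet> f) / (f \<bullet> f)"
  have ea: "a * (x \<bullet> e) = (x \<bullet> e)\<^sup>2 / (e \<bullet> e)" "a\<^sup>2 * (e \<bullet> e) = (x \<bullet> e)\<^sup>2 / (e \<bullet> e)"
    unfolding a_def by (auto simp: power2_eq_square)
  have fb: "b * (x \<bullet> f) = (x \<bullet> f)\<^sup>2 / (f \<bullet> f)" "b\<^sup>2 * (f \<bullet> f) = (x \<bullet> f)\<^sup>2 / (f \<bullet> f)"
    unfolding b_def by (auto simp: power2_eq_square)
  have "0 \<le> (x - a *\<^sub>R e - b *\<^sub>R f) \<bullet> (x - a *\<^sub>R e - b *\<^sub>R f)"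
    by simp
  also have "\<dots> = x \<bullet> x - 2 * (a * (x \<bullet> e)) - 2 * (b * (x \<bullet> f)) + a\<^sup>2 * (e \<bullet> e) + b\<^sup>2 * (f \<bullet> f)"
    using assms by (simp add: algebra_simps inner_commute power2_eq_square)
  finally show ?thesis
    unfolding ea fb by simp
qed

definition matrix_tensor :: "real^'n^'m \<Rightarrow> real^'n^'m \<Rightarrow> real^'n^'m^'n^'m" where
  "matrix_tensor A B = (\<chi> a b c d. A $ a $ b * B $ c $ d)"

lemma inner_matrix_tensor:
  "matrix_tensor A B \<bullet> matrix_tensor C D = (A \<bullet> C) * (B \<bullet> D)"
proof -
  have "(A \<bullet> C) * (B \<bullet> D) = (\<Sum>a\<in>UNIV. \<Sum>b\<in>UNIV. A $ a $ b * C $ a $ b * (B \<bullet> D))"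
    by (simp add: inner_vec_def sum_distrib_right)
  then show ?thesis
    by (simp add: matrix_tensor_def inner_vec_def sum_distrib_left mult_ac)
qed

(* A 4-tensor T acts on matrices by X |-> (sum_(c,d) T$a$b$c$d * X$c$d)_(a,b). So id_tensor is
   the identity, transpose_tensor maps X to its transpose, trace_tensor maps X to trace X * I and
   lmult_tensor W maps X to W ** X; traceless_sym_projector is the orthogonal projection onto
   the traceless symmetric matrices. *)
definition id_tensor :: "real^'n::finite^'n^'n^'n" where
  "id_tensor = (\<chi> a b c d. of_bool (a = c) * of_bool (b = d))"

definition transpose_tensor :: "real^'n::finite^'n^'n^'n" where
  "transpose_tensor = (\<chi> a b c d. of_bool (b = c) * of_bool (a = d))"

definition trace_tensor :: "real^'n::finite^'n^'n^'n" where
  "trace_tensor = (\<chi> a b c d. of_bool (a = b) * of_bool (c = d))"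

definition lmult_tensor :: "real^'n::finite^'n \<Rightarrow> real^'n^'n^'n^'n" where
  "lmult_tensor W = (\<chi> a b c d. W $ a $ c * of_bool (b = d))"

lemma inner_id_tensor: "id_tensor \<bullet> F = (\<Sum>a\<in>UNIV. \<Sum>b\<in>UNIV. F $ a $ b $ a $ b)"
  by (simp add: id_tensor_def inner_vec_def mult.assoc flip: sum_distrib_left)

lemma inner_transpose_tensor: "transpose_tensor \<bullet> F = (\<Sum>a\<in>UNIV. \<Sum>b\<in>UNIV. F $ a $ b $ b $ a)"
  by (simp add: transpose_tensor_def inner_vec_def mult.assoc flip: sum_distrib_left)

lemma inner_trace_tensor: "trace_tensor \<bullet> F = (\<Sum>a\<in>UNIV. \<Sum>c\<in>UNIV. F $ a $ a $ c $ c)"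
  by (simp add: trace_tensor_def inner_vec_def mult.assoc flip: sum_distrib_left)

lemma inner_lmult_tensor:
  "lmult_tensor W \<bullet> F = (\<Sum>a\<in>UNIV. \<Sum>c\<in>UNIV. W $ a $ c * (\<Sum>b\<in>UNIV. F $ a $ b $ c $ b))"
proof -
  have "lmult_tensor W \<bullet> F = (\<Sum>a\<in>UNIV. \<Sum>b\<in>UNIV. \<Sum>c\<in>UNIV. W $ a $ c * F $ a $ b $ c $ b)"
    by (simp add: lmult_tensor_def inner_vec_def mult.assoc flip: sum_distrib_left)
  also have "\<dots> = (\<Sum>a\<in>UNIV. \<Sum>c\<in>UNIV. W $ a $ c * (\<Sum>b\<in>UNIV. F $ a $ b $ c $ b))"
    by (rule sum.cong[OF refl], subst sum.swap) (simp add: sum_distrib_left)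
  finally show ?thesis .
qed

definition traceless_sym_projector :: "real^'n::finite^'n^'n^'n" where
  "traceless_sym_projector =
     (1 / 2) *\<^sub>R (id_tensor + transpose_tensor) - (1 / real CARD('n)) *\<^sub>R trace_tensor"

lemma inner_traceless_sym_projector_self:
  "traceless_sym_projector \<bullet> (traceless_sym_projector :: real^'n::finite^'n^'n^'n)
     = (real CARD('n) - 1) * (real CARD('n) + 2) / 2"
proof -
  have "id_tensor \<bullet> (id_tensor :: real^'n^'n^'n^'n) = real CARD('n)^2"
     "transpose_tensor \<bullet> (transpose_tensor :: real^'n^'n^'n^'n) = real CARD('n)^2"
     "trace_tensor \<bullet> (trace_tensor :: real^'n^'n^'n^'n) = real CARD('n)^2"
     "id_tensor \<bullet> (transpose_tensor :: real^'n^'n^'n^'n) = real CARD('n)"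
     "id_tensor \<bullet> (trace_tensor :: real^'n^'n^'n^'n) = real CARD('n)"
     "transpose_tensor \<bullet> (trace_tensor :: real^'n^'n^'n^'n) = real CARD('n)"
    by (simp_all add: inner_id_tensor inner_transpose_tensor inner_trace_tensor,
        simp_all add: id_tensor_def transpose_tensor_def trace_tensor_def power2_eq_square)
  then show ?thesis
    unfolding traceless_sym_projector_def
    by (simp add: inner_add_left inner_add_right inner_diff_left inner_diff_right inner_commute
        field_simps power2_eq_square)
qed

lemma inner_traceless_sym_projector_lmult_tensor:
  assumes "trace W = 0"
  shows "traceless_sym_projector \<bullet> lmult_tensor W = 0"
  using assms
  by (simp add: traceless_sym_projector_def inner_add_left inner_diff_left
      inner_id_tensor inner_transpose_tensor inner_trace_tensor,
      simp add: lmult_tensor_def trace_def flip: sum_distrib_left)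

lemma inner_lmult_tensor_self:
  "lmult_tensor W \<bullet> lmult_tensor W = real CARD('n) * (W \<bullet> (W :: real^'n::finite^'n))"
  unfolding inner_lmult_tensor
  by (simp add: lmult_tensor_def inner_vec_def sum_distrib_left mult_ac)

lemma inner_traceless_sym_projector_matrix_tensor:
  fixes A :: "real^'n::finite^'n"
  assumes "transpose A = A" "trace A = 0"
  shows "traceless_sym_projector \<bullet> matrix_tensor A A = A \<bullet> A"
proof -
  have "A $ b $ a = A $ a $ b" for a b
    using arg_cong[where f = "\<lambda>M. M $ a $ b", OF assms(1)] by (simp add: transpose_def)
  with assms(2) show ?thesis
    unfolding traceless_sym_projector_def inner_add_left inner_diff_left inner_scaleR_left
      inner_id_tensor inner_transpose_tensor inner_trace_tensor
    by (simp add: matrix_tensor_def inner_vec_def trace_def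
        flip: sum_distrib_left sum_distrib_right)
qed

lemma inner_lmult_tensor_matrix_tensor:
  "lmult_tensor W \<bullet> matrix_tensor A A = W \<bullet> (A ** transpose (A :: real^'n::finite^'n))"
  unfolding inner_lmult_tensor
  by (simp add: matrix_tensor_def inner_vec_def matrix_matrix_mult_def transpose_def
      sum_distrib_left mult_ac)

lemma sum_sq_inner_lower_bound:
  fixes M :: "'p \<Rightarrow> real^'n::finite^'n"
  assumes sym: "\<And>p. p \<in> C \<Longrightarrow> transpose (M p) = M p"
    and traceless: "\<And>p. p \<in> C \<Longrightarrow> trace (M p) = 0"
    and square: "\<And>p. p \<in> C \<Longrightarrow> M p ** M p = g *\<^sub>R M p + c *\<^sub>R mat 1"
  shows "(real (card C) * real CARD('n) * c)\<^sup>2 / ((real CARD('n) - 1) * (real CARD('n) + 2) / 2)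
           + g\<^sup>2 / real CARD('n) * ((\<Sum>p\<in>C. M p) \<bullet> (\<Sum>p\<in>C. M p))
         \<le> (\<Sum>p\<in>C. \<Sum>q\<in>C. (M p \<bullet> M q)\<^sup>2)"
proof -
  define n where "n = real CARD('n)"
  define G where "G = (\<Sum>p\<in>C. matrix_tensor (M p) (M p))"
  define W where "W = (\<Sum>p\<in>C. M p)"
  define K where "K = lmult_tensor W"
  have "M p ** transpose (M p) = g *\<^sub>R M p + c *\<^sub>R mat 1" if "p \<in> C" for p
    using sym square that by simp
  then have M_mult_transpose: "W \<bullet> (M p ** transpose (M p)) = g * (W \<bullet> M p) + c * trace W"
    if "p \<in> C" for p
    using that by (simp add: inner_add_right inner_matrix_eq_trace[of _ "mat 1"])
  have M_norm: "M p \<bullet> M p = n * c" if "p \<in> C" for p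
    unfolding n_def
    by (rule inner_self_quadratic_matrix[OF sym[OF that] traceless[OF that] square[OF that]])
  have trace_W: "trace W = 0"
    by (simp add: W_def trace_sum traceless)
  have GG: "G \<bullet> G = (\<Sum>p\<in>C. \<Sum>q\<in>C. (M p \<bullet> M q)\<^sup>2)"
    by (simp add: G_def inner_sum_left inner_sum_right inner_matrix_tensor power2_eq_square)
      (rule sum.swap)
  have GT: "G \<bullet> traceless_sym_projector = real (card C) * n * c"
    by (simp add: G_def inner_sum_left inner_commute[of "matrix_tensor _ _"] sym traceless
        inner_traceless_sym_projector_matrix_tensor M_norm)
  have "G \<bullet> K = (\<Sum>p\<in>C. g * (W \<bullet> M p))"
    by (simp add: G_def K_def inner_sum_left inner_commute[of "matrix_tensor _ _"]
        inner_lmult_tensor_matrix_tensor M_mult_transpose trace_W)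
  also have "\<dots> = g * (W \<bullet> W)"
    by (simp add: W_def inner_sum_right sum_distrib_left)
  finally have GK: "G \<bullet> K = g * (W \<bullet> W)" .
  have TK: "traceless_sym_projector \<bullet> K = 0"
    by (simp add: K_def inner_traceless_sym_projector_lmult_tensor trace_W)
  have "(G \<bullet> K)\<^sup>2 / (K \<bullet> K) = g\<^sup>2 / n * (W \<bullet> W)"
    unfolding GK by (simp add: K_def inner_lmult_tensor_self n_def power2_eq_square)
  with bessel_inequality_orthogonal_pair[OF TK, of G] show ?thesis
    by (simp add: GG GT inner_traceless_sym_projector_self n_def W_def)
qed

section \<open>The linear programming bound\<close>

(* Sum the polynomial (y - t) (y + b), which is nonpositive at the off-diagonal values, over all
   pairs: the diagonal terms bound it from above, the hypothesis on the sum of squares from below. *)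
lemma delsarte_lp_bound:
  fixes y :: "'a \<Rightarrow> 'a \<Rightarrow> real"
  assumes fin: "finite C"
    and diag: "\<And>p. p \<in> C \<Longrightarrow> y p p = a"
    and off: "\<And>p q. p \<in> C \<Longrightarrow> q \<in> C \<Longrightarrow> p \<noteq> q \<Longrightarrow> - b \<le> y p q \<and> y p q \<le> t"
    and sq: "(real (card C))\<^sup>2 * L + \<gamma> * (\<Sum>p\<in>C. \<Sum>q\<in>C. y p q) \<le> (\<Sum>p\<in>C. \<Sum>q\<in>C. (y p q)\<^sup>2)"
    and S_nonneg: "0 \<le> (\<Sum>p\<in>C. \<Sum>q\<in>C. y p q)"
    and t: "t \<le> \<gamma> + b"
  shows "(real (card C))\<^sup>2 * (L - t * b) \<le> real (card C) * ((a - t) * (a + b))"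
proof -
  define N where "N = real (card C)"
  define S where "S = (\<Sum>p\<in>C. \<Sum>q\<in>C. y p q)"
  have "N\<^sup>2 * (L - t * b) \<le> N\<^sup>2 * L + \<gamma> * S + (b - t) * S - N\<^sup>2 * (t * b)"
    using S_nonneg t mult_nonneg_nonneg[of "\<gamma> + b - t" S] unfolding S_def
    by (simp add: algebra_simps)
  also have "\<dots> \<le> (\<Sum>p\<in>C. \<Sum>q\<in>C. (y p q)\<^sup>2) + (b - t) * S - N\<^sup>2 * (t * b)"
    using sq unfolding N_def S_def by simp
  also have "\<dots> = (\<Sum>p\<in>C. \<Sum>q\<in>C. (y p q - t) * (y p q + b))"
    by (simp add: S_def N_def algebra_simps power2_eq_square sum.distrib sum_subtractf
        sum_distrib_left)
  also have "\<dots> \<le> (\<Sum>p\<in>C. (a - t) * (a + b))"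
  proof (rule sum_mono)
    fix p assume p: "p \<in> C"
    have "(y p q - t) * (y p q + b) \<le> 0" if "q \<in> C - {p}" for q
      using off[of p q] p that by (intro mult_nonpos_nonneg) auto
    then have "(\<Sum>q\<in>C - {p}. (y p q - t) * (y p q + b)) \<le> 0"
      by (rule sum_nonpos)
    then show "(\<Sum>q\<in>C. (y p q - t) * (y p q + b)) \<le> (a - t) * (a + b)"
      using sum.remove[OF fin p, of "\<lambda>q. (y p q - t) * (y p q + b)"] diag[OF p] by simp
  qed
  finally show ?thesis
    unfolding N_def by simp
qed

lemma traceless_code_lp_bound:
  fixes M :: "'p \<Rightarrow> real^'n::finite^'n"
  defines "n \<equiv> real CARD('n)"
  assumes fin: "finite C"
    and sym: "\<And>p. p \<in> C \<Longrightarrow> transpose (M p) = M p"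
    and traceless: "\<And>p. p \<in> C \<Longrightarrow> trace (M p) = 0"
    and square: "\<And>p. p \<in> C \<Longrightarrow> M p ** M p = g *\<^sub>R M p + c *\<^sub>R mat 1"
    and off: "\<And>p q. p \<in> C \<Longrightarrow> q \<in> C \<Longrightarrow> p \<noteq> q \<Longrightarrow> - b \<le> M p \<bullet> M q \<and> M p \<bullet> M q \<le> t"
    and t: "t \<le> g\<^sup>2 / n + b"
  shows "(real (card C))\<^sup>2 * ((n * c)\<^sup>2 / ((n - 1) * (n + 2) / 2) - t * b)
           \<le> real (card C) * ((n * c - t) * (n * c + b))"
proof (rule delsarte_lp_bound[OF fin, of "\<lambda>p q. M p \<bullet> M q"])
  have S: "(\<Sum>p\<in>C. M p) \<bullet> (\<Sum>p\<in>C. M p) = (\<Sum>p\<in>C. \<Sum>q\<in>C. M p \<bullet> M q)"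
    by (simp add: inner_sum_left inner_sum_right) (rule sum.swap)
  show "(real (card C))\<^sup>2 * ((n * c)\<^sup>2 / ((n - 1) * (n + 2) / 2))
          + g\<^sup>2 / n * (\<Sum>p\<in>C. \<Sum>q\<in>C. M p \<bullet> M q) \<le> (\<Sum>p\<in>C. \<Sum>q\<in>C. (M p \<bullet> M q)\<^sup>2)"
    using sum_sq_inner_lower_bound[of C M g c] sym traceless square unfolding S n_def
    by (simp add: power_mult_distrib)
  show "0 \<le> (\<Sum>p\<in>C. \<Sum>q\<in>C. M p \<bullet> M q)"
    unfolding S[symmetric] by simp
  show "M p \<bullet> M p = n * c" if "p \<in> C" for p
    unfolding n_def
    by (rule inner_self_quadratic_matrix[OF sym[OF that] traceless[OF that] square[OF that]])
qed (use off t in auto)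

(* Yields the hypothesis t <= g^2/n + b of traceless_code_lp_bound in the theorem. *)
lemma lp_coefficient_ineq:
  fixes n m :: real
  assumes "1 \<le> m" "m \<le> n" and n: "2 \<le> n"
  shows "2 * (n - m)\<^sup>2 / (n * (n - 1) * (n + 2)) \<le> (1 - 2 * m / n)\<^sup>2 / n + m\<^sup>2 / n"
proof -
  have h1: "(n - m)\<^sup>2 \<le> (n - 1)\<^sup>2"
    using assms by (intro power_mono) auto
  have h2: "2 * (n - 1) * n\<^sup>2 \<le> (n\<^sup>2 + (n - 2)\<^sup>2) * (n + 2)"
  proof -
    have "(n\<^sup>2 + (n - 2)\<^sup>2) * (n + 2) - 2 * (n - 1) * n\<^sup>2 = 2 * (n - 1)\<^sup>2 + 6"
      by (simp add: algebra_simps power2_eq_square)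
    then show ?thesis
      using zero_le_power2[of "n - 1"] by linarith
  qed
  have h3: "n\<^sup>2 + (n - 2)\<^sup>2 \<le> m\<^sup>2 * n\<^sup>2 + (n - 2 * m)\<^sup>2"
  proof -
    have "4 * n \<le> 2 * n\<^sup>2" "2 * n\<^sup>2 \<le> (m + 1) * n\<^sup>2"
      using assms by (simp_all add: power2_eq_square mult_right_mono)
    with assms have "0 \<le> (m - 1) * ((m + 1) * n\<^sup>2 - 4 * n + 4 * (m + 1))"
      by (intro mult_nonneg_nonneg) (linarith, smt (verit))
    also have "\<dots> = m\<^sup>2 * n\<^sup>2 + (n - 2 * m)\<^sup>2 - (n\<^sup>2 + (n - 2)\<^sup>2)"
      by (simp add: algebra_simps power2_eq_square)
    finally show ?thesis by simp
  qed
  have "2 * (n - m)\<^sup>2 * n\<^sup>2 \<le> 2 * (n - 1)\<^sup>2 * n\<^sup>2"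
    using h1 by (simp add: mult_right_mono)
  also have "\<dots> = (n - 1) * (2 * (n - 1) * n\<^sup>2)"
    by (simp add: power2_eq_square)
  also have "\<dots> \<le> (n - 1) * ((n\<^sup>2 + (n - 2)\<^sup>2) * (n + 2))"
    using h2 n by (intro mult_left_mono) auto
  also have "\<dots> \<le> (n - 1) * ((m\<^sup>2 * n\<^sup>2 + (n - 2 * m)\<^sup>2) * (n + 2))"
    using h3 n by (intro mult_left_mono mult_right_mono) auto
  finally have key: "2 * (n - m)\<^sup>2 * n\<^sup>2 \<le> (m\<^sup>2 * n\<^sup>2 + (n - 2 * m)\<^sup>2) * ((n - 1) * (n + 2))"
    by (simp add: mult_ac)
  have "2 * (n - m)\<^sup>2 / (n * (n - 1) * (n + 2))
      = 2 * (n - m)\<^sup>2 * n\<^sup>2 / (n ^ 3 * ((n - 1) * (n + 2)))"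
    using n by (simp add: power2_eq_square power3_eq_cube)
  also have "\<dots> \<le> (m\<^sup>2 * n\<^sup>2 + (n - 2 * m)\<^sup>2) * ((n - 1) * (n + 2)) / (n ^ 3 * ((n - 1) * (n + 2)))"
    using key n by (intro divide_right_mono) auto
  also have "\<dots> = (m\<^sup>2 * n\<^sup>2 + (n - 2 * m)\<^sup>2) / n ^ 3"
    using n by simp
  also have "\<dots> = (1 - 2 * m / n)\<^sup>2 / n + m\<^sup>2 / n"
    using n by (simp add: field_simps power2_eq_square power3_eq_cube)
  finally show ?thesis .
qed

lemma lp_bound_explicit:
  fixes n m s N :: real
  defines "e \<equiv> 2 * (n - m)\<^sup>2 / (n * (n - 1) * (n + 2))"
  assumes "1 \<le> m" "2 \<le> n" "s < m" "s < m\<^sup>2 / n + e" "0 \<le> N"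
    and "N\<^sup>2 * ((n * (m / n - (m / n)\<^sup>2))\<^sup>2 / ((n - 1) * (n + 2) / 2)
                - (s - m * (m / n)) * (m * (m / n)))
           \<le> N * ((n * (m / n - (m / n)\<^sup>2) - (s - m * (m / n)))
                  * (n * (m / n - (m / n)\<^sup>2) + m * (m / n)))"
  shows "N \<le> n / m * ((m - s) / (- s + m\<^sup>2 / n + e))"
proof -
  define b where "b = m\<^sup>2 / n"
  define d where "d = (n - 1) * (n + 2)"
  have n: "n \<noteq> 0" "d \<noteq> 0"
    using assms unfolding d_def by auto
  have a: "n * (m / n - (m / n)\<^sup>2) = m - b" "m * (m / n) = b"
    using n unfolding b_def by (simp_all add: field_simps power2_eq_square)
  have e_eq: "e = 2 * (n - m)\<^sup>2 / (n * d)"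
    unfolding e_def d_def by (simp add: mult.assoc)
  have "(m - b)\<^sup>2 / ((n - 1) * (n + 2) / 2) = b * e"
    using n unfolding e_eq b_def d_def[symmetric] by (simp add: field_simps power2_eq_square)
  then have "N\<^sup>2 * (b * (b + e - s)) \<le> N * ((m - s) * m)"
    using assms(7) unfolding a by (simp add: algebra_simps power2_eq_square)
  moreover have pos: "0 < b" "0 < b + e - s" "0 < m" "0 < m - s"
    using assms unfolding b_def by auto
  ultimately have "N * (b * (b + e - s)) \<le> (m - s) * m"
    using \<open>0 \<le> N\<close> by (cases "N = 0") (auto simp: power2_eq_square mult.assoc)
  then have "N \<le> (m - s) * m / (b * (b + e - s))"
    using pos by (simp add: pos_le_divide_eq)
  also have "\<dots> = m / b * ((m - s) / (b + e - s))"
    by (simp add: times_divide_times_eq mult.commute)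
  also have "m / b = n / m"
    using pos n unfolding b_def by (simp add: field_simps power2_eq_square)
  finally show ?thesis
    by (simp add: b_def algebra_simps)
qed

theorem theorem3p1:
  fixes C :: "(real^'n) set set" and m :: nat and \<delta> s :: real
  assumes "1 \<le> m" and "real m \<le> real CARD('n) / 2" and "\<delta> > 0"
    and "s = real m - \<delta>\<^sup>2"
    and "0 < s"
    and "s < (real m)\<^sup>2 / real CARD('n)
             + 2 * (real CARD('n) - real m)\<^sup>2
               / (real CARD('n) * (real CARD('n) - 1) * (real CARD('n) + 2))"
    and "delta_code m \<delta> C"
  shows "real (card C) \<le> real CARD('n) / real m * ((real m - s) /
           (- s + (real m)\<^sup>2 / real CARD('n)
             + 2 * (real CARD('n) - real m)\<^sup>2
               / (real CARD('n) * (real CARD('n) - 1) * (real CARD('n) + 2))))"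
proof -
  define n where "n = real CARD('n)"
  define k where "k = real m / n"
  have fin: "finite C"
    using assms(7) unfolding delta_code_def by simp
  obtain M :: "(real^'n) set \<Rightarrow> real^'n^'n"
    where M: "\<And>p. p \<in> C \<Longrightarrow> transpose (M p) = M p"
      "\<And>p. p \<in> C \<Longrightarrow> trace (M p) = 0"
      "\<And>p. p \<in> C \<Longrightarrow> M p ** M p = (1 - 2 * k) *\<^sub>R M p + (k - k\<^sup>2) *\<^sub>R mat 1"
      "\<And>p q. p \<in> C \<Longrightarrow> q \<in> C \<Longrightarrow> p \<noteq> q \<Longrightarrow>
             - (real m * k) \<le> M p \<bullet> M q \<and> M p \<bullet> M q \<le> s - real m * k"
    using delta_code_centered_projections
        [OF assms(7) less_imp_le[OF assms(3)] k_def[unfolded n_def]]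
    unfolding assms(4) by blast
  have coef: "s - real m * k \<le> (1 - 2 * k)\<^sup>2 / n + real m * k"
    using lp_coefficient_ineq[of "real m" n] assms(1,2,6) unfolding k_def n_def
    by (simp add: power2_eq_square)
  have "(real (card C))\<^sup>2 * ((n * (k - k\<^sup>2))\<^sup>2 / ((n - 1) * (n + 2) / 2)
            - (s - real m * k) * (real m * k))
      \<le> real (card C) * ((n * (k - k\<^sup>2) - (s - real m * k)) * (n * (k - k\<^sup>2) + real m * k))"
    using fin M coef unfolding n_def by (rule traceless_code_lp_bound)
  then show ?thesis
    unfolding n_def[symmetric] k_def
    by (intro lp_bound_explicit) (use assms in \<open>simp_all add: n_def\<close>)
qed

end
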